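(* Let $G$ be a hypo-efficient domination graph of order $n$. Then $G$ is connected, $n\geq 4$, and $2\leq\gamma(G)\leq n/2$. Furthermore, $\gamma(G)=n/2$ if and only if $G=C_4$.
   Context: All graphs are finite, simple and undirected. For $v\in V(G)$, $N[v]$ is the closed neighborhood of $v$. A set $D\subseteq V(G)$ is dominating if every vertex of $G$ not in $D$ has a neighbor in $D$; $\gamma(G)$ is the minimum size of a dominating set. A set $D\subseteq V(G)$ is an efficient dominating set (EDS) if $|N[v]\cap D|=1$ for every $v\in V(G)$. $G$ is a hypo-efficient domination graph if $G$ has no EDS but $G-v$ has at least one EDS for every $v\in V(G)$. *)

theory Defs
  imports Main
begin

definition simple_graph :: "'a set \<Rightarrow> ('a \<Rightarrow> 'a \<Rightarrow> bool) \<Rightarrow> bool" where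
  "simple_graph V E \<longleftrightarrow> finite V \<and> (\<forall>x y. E x y \<longrightarrow> x \<in> V \<and> y \<in> V)
     \<and> (\<forall>x y. E x y \<longrightarrow> E y x) \<and> (\<forall>x. \<not> E x x)"

definition closed_nbhd :: "'a set \<Rightarrow> ('a \<Rightarrow> 'a \<Rightarrow> bool) \<Rightarrow> 'a \<Rightarrow> 'a set" where
  "closed_nbhd V E v = {u \<in> V. u = v \<or> E v u}"

definition dominating :: "'a set \<Rightarrow> ('a \<Rightarrow> 'a \<Rightarrow> bool) \<Rightarrow> 'a set \<Rightarrow> bool" where
  "dominating V E D \<longleftrightarrow> D \<subseteq> V \<and> (\<forall>v \<in> V - D. \<exists>u \<in> D. E v u)"

definition domination_number :: "'a set \<Rightarrow> ('a \<Rightarrow> 'a \<Rightarrow> bool) \<Rightarrow> nat" where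
  "domination_number V E = Min {card D | D. dominating V E D}"

definition efficient_dominating :: "'a set \<Rightarrow> ('a \<Rightarrow> 'a \<Rightarrow> bool) \<Rightarrow> 'a set \<Rightarrow> bool" where
  "efficient_dominating V E D \<longleftrightarrow> D \<subseteq> V \<and> (\<forall>v \<in> V. card (closed_nbhd V E v \<inter> D) = 1)"

definition has_EDS :: "'a set \<Rightarrow> ('a \<Rightarrow> 'a \<Rightarrow> bool) \<Rightarrow> bool" where
  "has_EDS V E \<longleftrightarrow> (\<exists>D. efficient_dominating V E D)"

definition del_edges :: "('a \<Rightarrow> 'a \<Rightarrow> bool) \<Rightarrow> 'a \<Rightarrow> 'a \<Rightarrow> 'a \<Rightarrow> bool" where
  "del_edges E v = (\<lambda>x y. E x y \<and> x \<noteq> v \<and> y \<noteq> v)"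

definition hypo_efficient :: "'a set \<Rightarrow> ('a \<Rightarrow> 'a \<Rightarrow> bool) \<Rightarrow> bool" where
  "hypo_efficient V E \<longleftrightarrow> \<not> has_EDS V E \<and> (\<forall>v \<in> V. has_EDS (V - {v}) (del_edges E v))"

definition connected_graph :: "'a set \<Rightarrow> ('a \<Rightarrow> 'a \<Rightarrow> bool) \<Rightarrow> bool" where
  "connected_graph V E \<longleftrightarrow> V \<noteq> {} \<and> (\<forall>x \<in> V. \<forall>y \<in> V. E\<^sup>*\<^sup>* x y)"

definition is_C4 :: "'a set \<Rightarrow> ('a \<Rightarrow> 'a \<Rightarrow> bool) \<Rightarrow> bool" where
  "is_C4 V E \<longleftrightarrow> (\<exists>a b c d. distinct [a, b, c, d] \<and> V = {a, b, c, d} \<and>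
     (\<forall>x y. E x y \<longleftrightarrow> {x, y} \<in> {{a, b}, {b, c}, {c, d}, {d, a}}))"

end

theory Submission
  imports Defs
begin

text \<open>Deleting a vertex v leaves an efficient dominating set D of G - v; the closed
  neighbourhoods of its members partition V - {v}, and D extends to G exactly when v has a
  unique neighbour in D. This excludes isolated and dominating vertices, which gives n \<ge> 4,
  \<gamma> \<ge> 2 and, by Ore's bound, \<gamma> \<le> n/2, and it excludes disconnectedness, since efficient
  dominating sets of G - x and G - y glue along the component of x. If \<gamma> = n/2, then
  D \<union> {v} dominates G, so the blocks of the partition are small. For a leaf v all blocks but
  one have size 2 and one has size 3; local exchanges then either dominate G with fewer than
  \<gamma> vertices or produce an efficient dominating set of G. Hence every vertex has degree at
  least 2, all blocks have size at least 3, n \<le> 4, and G is the 4-cycle.\<close>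

lemma mem_closed_nbhd: "w \<in> closed_nbhd V E u \<longleftrightarrow> w \<in> V \<and> (w = u \<or> E u w)"
  unfolding closed_nbhd_def by auto

lemma closed_nbhd_subset: "closed_nbhd V E u \<subseteq> V"
  unfolding closed_nbhd_def by auto

lemma mem_closed_nbhd_commute:
  assumes "\<And>x y. E x y \<Longrightarrow> E y x" and "x \<in> V" and "y \<in> V"
  shows "x \<in> closed_nbhd V E y \<longleftrightarrow> y \<in> closed_nbhd V E x"
  using assms unfolding closed_nbhd_def by auto

lemma closed_nbhd_del_edges:
  "u \<noteq> v \<Longrightarrow> closed_nbhd (V - {v}) (del_edges E v) u = closed_nbhd V E u - {v}"
  unfolding closed_nbhd_def del_edges_def by auto

lemma efficient_dominating_iff:
  "efficient_dominating V E D \<longleftrightarrow> D \<subseteq> V \<and> (\<forall>x\<in>V. \<exists>d. closed_nbhd V E x \<inter> D = {d})"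
  unfolding efficient_dominating_def by (auto simp: card_1_singleton_iff)

lemma sum_card_closed_nbhd_efficient_dominating:
  assumes fin: "finite V" and sym: "\<And>x y. E x y \<Longrightarrow> E y x"
    and D: "efficient_dominating V E D"
  shows "(\<Sum>d\<in>D. card (closed_nbhd V E d)) = card V"
proof -
  have DV: "D \<subseteq> V" using D by (simp add: efficient_dominating_iff)
  have owner: "\<exists>d. closed_nbhd V E x \<inter> D = {d}" if "x \<in> V" for x
    using D that by (simp add: efficient_dominating_iff)
  have mem: "x \<in> closed_nbhd V E d \<longleftrightarrow> d \<in> closed_nbhd V E x" if "x \<in> V" "d \<in> D" for x d
    using mem_closed_nbhd_commute[where E=E, OF sym] that DV by blast
  have cover: "(\<Union>d\<in>D. closed_nbhd V E d) = V"
  proof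
    show "V \<subseteq> (\<Union>d\<in>D. closed_nbhd V E d)"
      using owner mem by blast
  qed (use closed_nbhd_subset in fast)
  have disjoint: "closed_nbhd V E d1 \<inter> closed_nbhd V E d2 = {}"
    if "d1 \<in> D" "d2 \<in> D" "d1 \<noteq> d2" for d1 d2
  proof (rule ccontr)
    assume "closed_nbhd V E d1 \<inter> closed_nbhd V E d2 \<noteq> {}"
    then obtain x where x: "x \<in> closed_nbhd V E d1" "x \<in> closed_nbhd V E d2" by auto
    then have "x \<in> V" using closed_nbhd_subset by fast
    then have "d1 \<in> closed_nbhd V E x \<inter> D" "d2 \<in> closed_nbhd V E x \<inter> D"
      using x mem that by auto
    moreover obtain d where "closed_nbhd V E x \<inter> D = {d}" using owner[OF \<open>x \<in> V\<close>] ..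
    ultimately show False using that by auto
  qed
  have "card V = card (\<Union>d\<in>D. closed_nbhd V E d)" using cover by simp
  also have "\<dots> = (\<Sum>d\<in>D. card (closed_nbhd V E d))"
    using fin DV disjoint
    by (intro card_UN_disjoint) (auto intro: finite_subset[OF closed_nbhd_subset] finite_subset)
  finally show ?thesis by simp
qed

lemma efficient_dominating_of_del_vertex:
  assumes D: "efficient_dominating (V - {v}) (del_edges E v) D"
    and v: "closed_nbhd V E v \<inter> D = {d}"
  shows "efficient_dominating V E D"
  unfolding efficient_dominating_iff
proof (intro conjI ballI)
  have DV: "D \<subseteq> V - {v}" using D by (simp add: efficient_dominating_iff)
  then show "D \<subseteq> V" by auto
  fix x assume x: "x \<in> V"
  show "\<exists>d. closed_nbhd V E x \<inter> D = {d}"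
  proof (cases "x = v")
    case False
    then have "closed_nbhd V E x \<inter> D = closed_nbhd (V - {v}) (del_edges E v) x \<inter> D"
      using DV by (auto simp: closed_nbhd_del_edges)
    then show ?thesis using D x False by (simp add: efficient_dominating_iff)
  qed (use v in auto)
qed

lemma efficient_dominating_insert_isolated:
  assumes sym: "\<And>x y. E x y \<Longrightarrow> E y x"
    and D: "efficient_dominating (V - {v}) (del_edges E v) D"
    and "v \<in> V" and isolated: "\<And>u. \<not> E v u"
  shows "efficient_dominating V E (insert v D)"
  unfolding efficient_dominating_iff
proof (intro conjI ballI)
  have DV: "D \<subseteq> V - {v}" using D by (simp add: efficient_dominating_iff)
  then show "insert v D \<subseteq> V" using \<open>v \<in> V\<close> by auto
  fix x assume x: "x \<in> V"
  show "\<exists>d. closed_nbhd V E x \<inter> insert v D = {d}"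
  proof (cases "x = v")
    case True
    then have "closed_nbhd V E x \<inter> insert v D = {v}"
      using isolated \<open>v \<in> V\<close> DV by (auto simp: closed_nbhd_def)
    then show ?thesis by blast
  next
    case False
    have "v \<notin> closed_nbhd V E x" using False isolated sym by (auto simp: closed_nbhd_def)
    then have "closed_nbhd V E x \<inter> insert v D = closed_nbhd (V - {v}) (del_edges E v) x \<inter> D"
      using False by (auto simp: closed_nbhd_del_edges)
    then show ?thesis using D x False by (simp add: efficient_dominating_iff)
  qed
qed

lemma efficient_dominating_union_closed:
  assumes closed: "\<And>u w. E u w \<Longrightarrow> u \<in> C \<longleftrightarrow> w \<in> C"
    and Dy: "efficient_dominating (V - {y}) (del_edges E y) Dy" and "y \<notin> C"
    and Dx: "efficient_dominating (V - {x}) (del_edges E x) Dx" and "x \<in> C"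
  shows "efficient_dominating V E (Dy \<inter> C \<union> (Dx - C))"
  unfolding efficient_dominating_iff
proof (intro conjI ballI)
  show "Dy \<inter> C \<union> (Dx - C) \<subseteq> V"
    using Dx Dy by (auto simp: efficient_dominating_iff)
  fix u assume u: "u \<in> V"
  show "\<exists>d. closed_nbhd V E u \<inter> (Dy \<inter> C \<union> (Dx - C)) = {d}"
  proof (cases "u \<in> C")
    case True
    then have "closed_nbhd V E u \<subseteq> C" using closed by (auto simp: closed_nbhd_def)
    then have "closed_nbhd V E u \<inter> (Dy \<inter> C \<union> (Dx - C)) = (closed_nbhd V E u - {y}) \<inter> Dy"
      using \<open>y \<notin> C\<close> by blast
    also have "\<dots> = closed_nbhd (V - {y}) (del_edges E y) u \<inter> Dy"
      using True \<open>y \<notin> C\<close> by (metis closed_nbhd_del_edges)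
    finally have "closed_nbhd V E u \<inter> (Dy \<inter> C \<union> (Dx - C))
        = closed_nbhd (V - {y}) (del_edges E y) u \<inter> Dy" .
    then show ?thesis using Dy u True \<open>y \<notin> C\<close> by (auto simp: efficient_dominating_iff)
  next
    case False
    then have "closed_nbhd V E u \<inter> C = {}" using closed by (auto simp: closed_nbhd_def)
    then have "closed_nbhd V E u \<inter> (Dy \<inter> C \<union> (Dx - C)) = (closed_nbhd V E u - {x}) \<inter> Dx"
      using \<open>x \<in> C\<close> by blast
    also have "\<dots> = closed_nbhd (V - {x}) (del_edges E x) u \<inter> Dx"
      using False \<open>x \<in> C\<close> by (metis closed_nbhd_del_edges)
    finally have "closed_nbhd V E u \<inter> (Dy \<inter> C \<union> (Dx - C))
        = closed_nbhd (V - {x}) (del_edges E x) u \<inter> Dx" .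
    then show ?thesis using Dx u False \<open>x \<in> C\<close> by (auto simp: efficient_dominating_iff)
  qed
qed

lemma finite_dominating_cards: "finite V \<Longrightarrow> finite {card D | D. dominating V E D}"
  by (rule finite_subset[of _ "card ` Pow V"]) (auto simp: dominating_def)

lemma domination_number_le:
  "finite V \<Longrightarrow> dominating V E S \<Longrightarrow> domination_number V E \<le> card S"
  unfolding domination_number_def by (auto intro: Min_le finite_dominating_cards)

lemma minimum_dominating_set:
  assumes "finite V"
  obtains D where "dominating V E D" and "card D = domination_number V E"
proof -
  have "dominating V E V" by (simp add: dominating_def)
  then have "{card D | D. dominating V E D} \<noteq> {}" by blast
  from Min_in[OF finite_dominating_cards[OF assms] this] show ?thesis
    using that unfolding domination_number_def by auto
qed

lemma minimum_dominating_outside_neighbour: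
  assumes G: "simple_graph V E"
    and D: "dominating V E D" "card D = domination_number V E"
    and "u \<in> D" and "\<exists>w. E u w"
  shows "\<exists>w\<in>V - D. E u w"
proof (rule ccontr)
  assume none: "\<not> (\<exists>w\<in>V - D. E u w)"
  have fin: "finite D" using G D(1) finite_subset unfolding simple_graph_def dominating_def by blast
  have "dominating V E (D - {u})"
    unfolding dominating_def
  proof (intro conjI ballI)
    show "D - {u} \<subseteq> V" using D(1) by (auto simp: dominating_def)
    fix z assume z: "z \<in> V - (D - {u})"
    show "\<exists>d\<in>D - {u}. E z d"
    proof (cases "z = u")
      case True
      then show ?thesis using G \<open>\<exists>w. E u w\<close> none unfolding simple_graph_def by blast
    next
      case False
      then obtain d where "d \<in> D" "E z d" using z D(1) by (auto simp: dominating_def)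
      then show ?thesis using G none z False unfolding simple_graph_def by blast
    qed
  qed
  then have "domination_number V E \<le> card (D - {u})"
    using G by (intro domination_number_le) (auto simp: simple_graph_def)
  then show False using D(2) \<open>u \<in> D\<close> fin card_Diff1_less by fastforce
qed

theorem domination_number_le_half:
  assumes G: "simple_graph V E" and no_isolated: "\<And>x. x \<in> V \<Longrightarrow> \<exists>u. E x u"
  shows "2 * domination_number V E \<le> card V"
proof -
  have fin: "finite V" using G by (simp add: simple_graph_def)
  obtain D where D: "dominating V E D" "card D = domination_number V E"
    using minimum_dominating_set[OF fin] .
  have DV: "D \<subseteq> V" using D(1) by (simp add: dominating_def)
  have "dominating V E (V - D)"
    unfolding dominating_def
  proof (intro conjI ballI)
    fix u assume "u \<in> V - (V - D)"
    then have "u \<in> D" "u \<in> V" using DV by auto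
    then show "\<exists>w\<in>V - D. E u w"
      using no_isolated minimum_dominating_outside_neighbour[OF G D] by blast
  qed auto
  then have "domination_number V E \<le> card V - card D"
    using domination_number_le[OF fin] card_Diff_subset[OF finite_subset[OF DV fin] DV] by metis
  then show ?thesis using D(2) card_mono[OF fin DV] by linarith
qed

lemma two_le_domination_number:
  assumes G: "simple_graph V E" and "V \<noteq> {}"
    and no_universal: "\<And>u. u \<in> V \<Longrightarrow> \<exists>w\<in>V. w \<noteq> u \<and> \<not> E u w"
  shows "2 \<le> domination_number V E"
proof -
  have fin: "finite V" using G by (simp add: simple_graph_def)
  obtain D where D: "dominating V E D" "card D = domination_number V E"
    using minimum_dominating_set[OF fin] .
  have DV: "D \<subseteq> V" using D(1) by (simp add: dominating_def)
  have "D \<noteq> {}" using D(1) \<open>V \<noteq> {}\<close> by (auto simp: dominating_def)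
  then have "card D \<noteq> 0" using finite_subset[OF DV fin] by simp
  moreover have "card D \<noteq> 1"
  proof
    assume "card D = 1"
    then obtain u where u: "D = {u}" by (auto simp: card_1_singleton_iff)
    then obtain w where "w \<in> V" "w \<noteq> u" "\<not> E u w" using no_universal DV by blast
    then show False using D(1) u G by (auto simp: dominating_def simple_graph_def)
  qed
  ultimately show ?thesis using D(2) by linarith
qed

lemma four_le_card:
  assumes G: "simple_graph V E" and "V \<noteq> {}"
    and no_isolated: "\<And>x. x \<in> V \<Longrightarrow> \<exists>u. E x u"
    and no_universal: "\<And>u. u \<in> V \<Longrightarrow> \<exists>w\<in>V. w \<noteq> u \<and> \<not> E u w"
  shows "4 \<le> card V"
proof (rule ccontr)
  assume small: "\<not> 4 \<le> card V"
  have fin: "finite V" and sym: "\<And>x y. E x y \<Longrightarrow> E y x" and irrefl: "\<And>x. \<not> E x x"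
    and edge: "\<And>x y. E x y \<Longrightarrow> x \<in> V \<and> y \<in> V"
    using G by (auto simp: simple_graph_def)
  obtain x where x: "x \<in> V" using \<open>V \<noteq> {}\<close> by auto
  obtain y where y: "E x y" using no_isolated[OF x] by auto
  obtain z where z: "z \<in> V" "z \<noteq> x" "\<not> E x z" using no_universal[OF x] by auto
  have "card {x, y, z} = 3" using y z irrefl by (auto simp: card_insert_if)
  moreover have "{x, y, z} \<subseteq> V" using x z edge[OF y] by auto
  moreover have "card V \<le> 3" using small by linarith
  ultimately have V: "V = {x, y, z}" using fin by (metis card_seteq)
  obtain w where "w \<in> V" "w \<noteq> y" "\<not> E y w" using no_universal edge[OF y] by blast
  then have "\<not> E y z" using V sym[OF y] by auto
  obtain u where "E z u" using no_isolated[OF z(1)] by auto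
  then show False using edge V z(3) \<open>\<not> E y z\<close> sym irrefl by blast
qed

lemma is_C4_if_card_4:
  assumes G: "simple_graph V E" and card: "card V = 4"
    and two_nbrs: "\<And>x. x \<in> V \<Longrightarrow> \<exists>u w. E x u \<and> E x w \<and> u \<noteq> w"
    and no_universal: "\<And>u. u \<in> V \<Longrightarrow> \<exists>w\<in>V. w \<noteq> u \<and> \<not> E u w"
  shows "is_C4 V E"
proof -
  have fin: "finite V" and sym: "\<And>x y. E x y \<Longrightarrow> E y x" and irrefl: "\<And>x. \<not> E x x"
    and edge: "\<And>x y. E x y \<Longrightarrow> x \<in> V \<and> y \<in> V"
    using G by (auto simp: simple_graph_def)
  obtain a where a: "a \<in> V" using card by fastforce
  obtain b d where bd: "E a b" "E a d" "b \<noteq> d" using two_nbrs[OF a] by auto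
  obtain c where c: "c \<in> V" "c \<noteq> a" "\<not> E a c" using no_universal[OF a] by auto
  have dist: "distinct [a, b, c, d]" using bd c irrefl by auto
  then have "card {a, b, c, d} = 4" by auto
  moreover have "{a, b, c, d} \<subseteq> V" using a c edge bd by auto
  ultimately have V: "V = {a, b, c, d}" using card fin by (metis card_seteq order_refl)
  obtain u w where uw: "E c u" "E c w" "u \<noteq> w" using two_nbrs[OF c(1)] by auto
  then have "u \<in> {b, d}" "w \<in> {b, d}" using V edge irrefl sym c(3) by blast+
  then have cb: "E c b" and cd: "E c d" using uw by auto
  obtain z where z: "z \<in> V" "z \<noteq> b" "\<not> E b z" using no_universal edge bd(1) by blast
  then have nbd: "\<not> E b d" using V sym bd(1) cb by auto
  have "E x y \<longleftrightarrow> {x, y} \<in> {{a, b}, {b, c}, {c, d}, {d, a}}" for x y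
  proof
    assume e: "E x y"
    then have "x \<in> V" "y \<in> V" "x \<noteq> y" using edge irrefl by auto
    then show "{x, y} \<in> {{a, b}, {b, c}, {c, d}, {d, a}}"
      using V e c(3) nbd sym by (auto simp: insert_commute)
  next
    assume "{x, y} \<in> {{a, b}, {b, c}, {c, d}, {d, a}}"
    then show "E x y" using bd cb cd sym by (auto simp: doubleton_eq_iff)
  qed
  then show ?thesis unfolding is_C4_def using dist V by blast
qed

lemma card_C4: "is_C4 V E \<Longrightarrow> card V = 4"
  unfolding is_C4_def by auto

lemma domination_number_C4:
  assumes G: "simple_graph V E" and "is_C4 V E"
  shows "domination_number V E = 2"
proof -
  obtain a b c d where dist: "distinct [a, b, c, d]" and V: "V = {a, b, c, d}"
    and E: "\<And>x y. E x y \<longleftrightarrow> {x, y} \<in> {{a, b}, {b, c}, {c, d}, {d, a}}"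
    using assms(2) unfolding is_C4_def by blast
  have "dominating V E {a, c}"
    using dist V E by (auto simp: dominating_def insert_commute)
  then have "domination_number V E \<le> 2"
    using domination_number_le[of V E "{a, c}"] V dist by (auto simp: card_insert_if)
  moreover have "2 \<le> domination_number V E"
  proof (rule two_le_domination_number[OF G])
    fix u assume "u \<in> V"
    then show "\<exists>w\<in>V. w \<noteq> u \<and> \<not> E u w"
      using dist V E by (auto simp: doubleton_eq_iff)
  qed (use V in auto)
  ultimately show ?thesis by simp
qed

lemma sum_excess_one:
  fixes f :: "'b \<Rightarrow> nat"
  assumes "finite D" and ge2: "\<And>d. d \<in> D \<Longrightarrow> 2 \<le> f d"
    and sum: "(\<Sum>d\<in>D. f d) = 2 * card D + 1"
    and "d0 \<in> D" and "3 \<le> f d0"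
  shows "f d0 = 3" and "\<And>d. d \<in> D \<Longrightarrow> d \<noteq> d0 \<Longrightarrow> f d = 2"
proof -
  have "(\<Sum>d\<in>D. f d) = (\<Sum>d\<in>D. (f d - 2) + 2)"
    using ge2 by (intro sum.cong) (auto dest!: ge2)
  also have "\<dots> = (\<Sum>d\<in>D. f d - 2) + 2 * card D"
    by (simp only: sum.distrib) (simp add: mult.commute)
  finally have excess: "(\<Sum>d\<in>D. f d - 2) = 1" using sum by simp
  also have "(\<Sum>d\<in>D. f d - 2) = (f d0 - 2) + (\<Sum>d\<in>D - {d0}. f d - 2)"
    using \<open>finite D\<close> \<open>d0 \<in> D\<close> by (rule sum.remove)
  finally have "f d0 - 2 = 1" and rest: "(\<Sum>d\<in>D - {d0}. f d - 2) = 0"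
    using \<open>3 \<le> f d0\<close> by linarith+
  then show "f d0 = 3" by simp
  fix d assume "d \<in> D" "d \<noteq> d0"
  then show "f d = 2" using rest ge2[of d] \<open>finite D\<close> by force
qed

locale hypo_efficient_graph =
  fixes V :: "'a set" and E :: "'a \<Rightarrow> 'a \<Rightarrow> bool"
  assumes simple: "simple_graph V E" and hypo: "hypo_efficient V E"
begin

abbreviation N :: "'a \<Rightarrow> 'a set" where "N \<equiv> closed_nbhd V E"

lemma finite_V: "finite V"
  and sym: "E x y \<Longrightarrow> E y x"
  and edge_in_V: "E x y \<Longrightarrow> x \<in> V" "E x y \<Longrightarrow> y \<in> V"
  and irrefl: "\<not> E x x"
  using simple unfolding simple_graph_def by auto

lemma no_efficient_dominating: "\<not> efficient_dominating V E D"
  using hypo unfolding hypo_efficient_def has_EDS_def by auto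

lemma efficient_dominating_delete:
  assumes "v \<in> V"
  obtains D where "efficient_dominating (V - {v}) (del_edges E v) D"
  using hypo assms unfolding hypo_efficient_def has_EDS_def by auto

lemma V_nonempty: "V \<noteq> {}"
proof
  assume "V = {}"
  then have "efficient_dominating V E {}" by (simp add: efficient_dominating_def)
  then show False using no_efficient_dominating by blast
qed

lemma not_isolated: "x \<in> V \<Longrightarrow> \<exists>u. E x u"
proof (rule ccontr)
  assume "x \<in> V" and "\<not> (\<exists>u. E x u)"
  obtain D where "efficient_dominating (V - {x}) (del_edges E x) D"
    using efficient_dominating_delete[OF \<open>x \<in> V\<close>] .
  then have "efficient_dominating V E (insert x D)"
    using efficient_dominating_insert_isolated[where E = E, OF sym] \<open>x \<in> V\<close> \<open>\<not> (\<exists>u. E x u)\<close> by blast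
  then show False using no_efficient_dominating by blast
qed

lemma not_universal: "u \<in> V \<Longrightarrow> \<exists>w\<in>V. w \<noteq> u \<and> \<not> E u w"
proof (rule ccontr)
  assume "u \<in> V" and "\<not> (\<exists>w\<in>V. w \<noteq> u \<and> \<not> E u w)"
  then have "closed_nbhd V E x \<inter> {u} = {u}" if "x \<in> V" for x
    using that sym by (auto simp: closed_nbhd_def)
  then have "efficient_dominating V E {u}"
    using \<open>u \<in> V\<close> by (auto simp: efficient_dominating_iff)
  then show False using no_efficient_dominating by blast
qed

lemma connected: "connected_graph V E"
  unfolding connected_graph_def
proof (intro conjI ballI V_nonempty)
  fix x y assume x: "x \<in> V" and y: "y \<in> V"
  show "E\<^sup>*\<^sup>* x y"
  proof (rule ccontr)
    assume "\<not> E\<^sup>*\<^sup>* x y"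
    define C where "C = {w. E\<^sup>*\<^sup>* x w}"
    have closed: "u \<in> C \<longleftrightarrow> w \<in> C" if "E u w" for u w
      using rtranclp.rtrancl_into_rtrancl[of E x u w] rtranclp.rtrancl_into_rtrancl[of E x w u]
        that sym[OF that] unfolding C_def by blast
    obtain Dy where "efficient_dominating (V - {y}) (del_edges E y) Dy"
      using efficient_dominating_delete[OF y] .
    moreover obtain Dx where "efficient_dominating (V - {x}) (del_edges E x) Dx"
      using efficient_dominating_delete[OF x] .
    ultimately have "efficient_dominating V E (Dy \<inter> C \<union> (Dx - C))"
      using efficient_dominating_union_closed[where E = E, OF closed] \<open>\<not> E\<^sup>*\<^sup>* x y\<close> unfolding C_def by auto
    then show False using no_efficient_dominating by blast
  qed
qed

end

locale vertex_deleted_eds = hypo_efficient_graph +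
  fixes v :: 'a and D :: "'a set"
  assumes v_in_V: "v \<in> V"
    and eds: "efficient_dominating (V - {v}) (del_edges E v) D"
begin

abbreviation M :: "'a \<Rightarrow> 'a set" where "M \<equiv> closed_nbhd (V - {v}) (del_edges E v)"

lemma D_subset: "D \<subseteq> V - {v}"
  using eds by (simp add: efficient_dominating_iff)

lemma finite_D: "finite D"
  using D_subset finite_V finite_subset by blast

lemma finite_M: "finite (M u)"
  using finite_V closed_nbhd_subset by (metis finite_Diff finite_subset)

lemma mem_M: "u \<noteq> v \<Longrightarrow> x \<in> M u \<longleftrightarrow> x \<in> V \<and> x \<noteq> v \<and> (x = u \<or> E u x)"
  by (auto simp: closed_nbhd_del_edges mem_closed_nbhd)

lemma mem_M_commute:
  assumes "x \<noteq> v" and "y \<noteq> v"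
  shows "x \<in> M y \<longleftrightarrow> y \<in> M x"
proof -
  have "b \<in> M a" if "a \<in> M b" "a \<noteq> v" "b \<noteq> v" for a b
  proof -
    have "a \<in> V" "a = b \<or> E b a" using that(1) mem_M[OF that(3)] by auto
    then have "b \<in> V" "b = a \<or> E a b" using edge_in_V(1)[of b a] sym[of b a] by auto
    then show ?thesis using mem_M[OF that(2)] that(3) by simp
  qed
  then show ?thesis using assms by blast
qed

lemma M_owner: "x \<in> V \<Longrightarrow> x \<noteq> v \<Longrightarrow> \<exists>d. M x \<inter> D = {d}"
  using eds by (simp add: efficient_dominating_iff)

lemma sum_card_M: "(\<Sum>d\<in>D. card (M d)) = card V - 1"
  using sum_card_closed_nbhd_efficient_dominating[where E = "del_edges E v", OF _ _ eds] finite_V v_in_V sym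
  by (simp add: del_edges_def)

lemma mult_card_D_le:
  assumes "\<And>d. d \<in> D \<Longrightarrow> k \<le> card (M d)"
  shows "k * card D \<le> card V - 1"
proof -
  have "(\<Sum>d\<in>D. k) \<le> (\<Sum>d\<in>D. card (M d))" using assms by (rule sum_mono)
  then show ?thesis using sum_card_M by (simp add: mult.commute)
qed

lemma card_M_gt:
  assumes "d \<in> D" and "finite A" and nbrs: "\<And>u. u \<in> A \<Longrightarrow> E d u \<and> u \<noteq> v"
  shows "card A < card (M d)"
proof -
  have "d \<noteq> v" "d \<in> V" using assms(1) D_subset by auto
  have "insert d A \<subseteq> M d"
  proof
    fix u assume "u \<in> insert d A"
    then have "u = d \<or> (E d u \<and> u \<noteq> v)" using nbrs by blast
    then show "u \<in> M d"
      using \<open>d \<noteq> v\<close> \<open>d \<in> V\<close> edge_in_V(2)[of d u] by (auto simp: mem_M)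
  qed
  then have "card (insert d A) \<le> card (M d)" by (rule card_mono[OF finite_M])
  moreover have "d \<notin> A" using nbrs irrefl by blast
  ultimately show ?thesis using \<open>finite A\<close> by simp
qed

lemma no_unique_owner_of_v: "\<not> (\<exists>d. N v \<inter> D = {d})"
  using efficient_dominating_of_del_vertex[OF eds] no_efficient_dominating by blast

lemma dominating_exchange:
  assumes "S \<subseteq> V" and v: "v \<in> S \<or> (\<exists>y\<in>S. E v y)"
    and removed: "\<And>d x. d \<in> D - S \<Longrightarrow> x \<in> M d - S \<Longrightarrow> \<exists>y\<in>S. E x y"
  shows "dominating V E S"
  unfolding dominating_def
proof (intro conjI ballI \<open>S \<subseteq> V\<close>)
  fix x assume x: "x \<in> V - S"
  show "\<exists>y\<in>S. E x y"
  proof (cases "x = v")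
    case True
    then show ?thesis using v x by auto
  next
    case False
    then obtain d where d: "M x \<inter> D = {d}" using M_owner x by blast
    then have "d \<noteq> v" using D_subset by auto
    show ?thesis
    proof (cases "d \<in> S")
      case True
      have "d \<in> M x" using d by blast
      then have "E x d" using True x mem_M[OF \<open>x \<noteq> v\<close>] by auto
      then show ?thesis using True by blast
    next
      case False
      have "d \<in> M x" "d \<in> D" using d by blast+
      then have "x \<in> M d" using mem_M_commute[OF \<open>x \<noteq> v\<close> \<open>d \<noteq> v\<close>] by simp
      then show ?thesis using removed[of d x] \<open>d \<in> D\<close> False x by blast
    qed
  qed
qed

lemma domination_number_le_Suc_card_D: "domination_number V E \<le> card D + 1"
proof -
  have "dominating V E (insert v D)"
    using D_subset v_in_V by (intro dominating_exchange) auto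
  then have "domination_number V E \<le> card (insert v D)"
    by (rule domination_number_le[OF finite_V])
  also have "\<dots> \<le> card D + 1"
    using finite_D by (simp add: card_insert_if)
  finally show ?thesis .
qed

lemma card_V_pos: "0 < card V"
  using v_in_V finite_V card_gt_0_iff by blast

lemma card_V_le_4_if_half:
  assumes half: "2 * domination_number V E = card V"
    and two_nbrs: "\<And>x. x \<in> V \<Longrightarrow> \<exists>u w. E x u \<and> E x w \<and> u \<noteq> w"
  shows "card V \<le> 4"
proof -
  have D_in_V: "d \<in> V" if "d \<in> D" for d using that D_subset by auto
  have v_not_adjacent: "\<not> E v d" if "d \<in> D" for d
  proof
    assume "E v d"
    then have "dominating V E D" using D_subset that by (intro dominating_exchange) auto
    then have "domination_number V E \<le> card D" by (rule domination_number_le[OF finite_V])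
    moreover have "2 \<le> card (M d')" if d': "d' \<in> D" for d'
    proof -
      obtain u w where "E d' u" "E d' w" "u \<noteq> w" using two_nbrs D_in_V[OF d'] by blast
      then obtain z where "E d' z" "z \<noteq> v" by blast
      then show ?thesis using card_M_gt[OF d', of "{z}"] by simp
    qed
    then have "2 * card D \<le> card V - 1" by (rule mult_card_D_le)
    ultimately show False using half card_V_pos by linarith
  qed
  have "3 \<le> card (M d)" if d: "d \<in> D" for d
  proof -
    obtain u w where uw: "E d u" "E d w" "u \<noteq> w" using two_nbrs D_in_V[OF d] by blast
    then have "u \<noteq> v" "w \<noteq> v" using v_not_adjacent[OF d] sym by auto
    then have "card {u, w} < card (M d)" using uw by (intro card_M_gt[OF d]) auto
    then show ?thesis using uw(3) by simp
  qed
  then have "3 * card D \<le> card V - 1" by (rule mult_card_D_le)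
  then show ?thesis using half domination_number_le_Suc_card_D by linarith
qed

end

locale leaf_deleted_eds = vertex_deleted_eds +
  fixes s :: 'a
  assumes leaf: "E v u \<longleftrightarrow> u = s"
    and half: "2 * domination_number V E = card V"
begin

lemma s_in_V: "s \<in> V" and s_ne_v: "s \<noteq> v"
  using leaf[of s] edge_in_V(2)[of v s] irrefl[of v] by auto

lemma s_notin_D: "s \<notin> D"
proof
  assume "s \<in> D"
  then have "N v \<inter> D = {s}"
    using D_subset leaf s_in_V by (auto simp: closed_nbhd_def)
  then show False using no_unique_owner_of_v by blast
qed

lemma two_le_card_M: "d \<in> D \<Longrightarrow> 2 \<le> card (M d)"
proof -
  assume "d \<in> D"
  then obtain u where "E d u" using not_isolated D_subset by blast
  moreover have "u \<noteq> v"
  proof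
    assume "u = v"
    then have "d = s" using \<open>E d u\<close> sym leaf by blast
    then show False using \<open>d \<in> D\<close> s_notin_D by blast
  qed
  ultimately show ?thesis using card_M_gt[OF \<open>d \<in> D\<close>, of "{u}"] by simp
qed

text \<open>The blocks M d have size at least 2, D \<union> {v} dominates G, and n = 2\<gamma> is even.\<close>

lemma card_V_eq: "card V = 2 * card D + 2"
proof -
  have "2 * card D \<le> card V - 1" using two_le_card_M by (rule mult_card_D_le)
  then show ?thesis using half domination_number_le_Suc_card_D card_V_pos by presburger
qed

lemma card_D_lt_card_dominating: "dominating V E S \<Longrightarrow> card D < card S"
  using domination_number_le[OF finite_V, of E S] half card_V_eq by linarith

lemma card_M_eq_3:
  assumes "d0 \<in> D" and "3 \<le> card (M d0)"
  shows "card (M d0) = 3" and "\<And>d. d \<in> D \<Longrightarrow> d \<noteq> d0 \<Longrightarrow> card (M d) = 2"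
proof -
  have sum: "(\<Sum>d\<in>D. card (M d)) = 2 * card D + 1" using sum_card_M card_V_eq by simp
  note excess = sum_excess_one[where f = "\<lambda>d. card (M d)", OF finite_D two_le_card_M sum assms]
  show "card (M d0) = 3" by (rule excess(1))
  show "card (M d) = 2" if "d \<in> D" "d \<noteq> d0" for d using excess(2) that by blast
qed

lemma owner_of_s:
  assumes "M s \<inter> D = {ds}"
  shows "ds \<in> D" and "ds \<noteq> v" and "ds \<noteq> s" and "E s ds" and "s \<in> M ds"
proof -
  show "ds \<in> D" using assms by blast
  then show "ds \<noteq> v" and "ds \<noteq> s" using D_subset s_notin_D by auto
  have "ds \<in> M s" using assms by blast
  then show "E s ds" using mem_M[OF s_ne_v] \<open>ds \<noteq> s\<close> by simp
  show "s \<in> M ds" using \<open>ds \<in> M s\<close> mem_M_commute[OF s_ne_v \<open>ds \<noteq> v\<close>] by simp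
qed

text \<open>If every further vertex of the block of ds were adjacent to s, then s could replace ds,
  giving a dominating set of size |D| < \<gamma>.\<close>

lemma block_of_owner_of_s:
  assumes ds: "M s \<inter> D = {ds}"
  obtains t where "M ds = {ds, s, t}" and "t \<noteq> ds" and "t \<noteq> s" and "\<not> E s t"
proof -
  note ds_facts = owner_of_s[OF ds]
  have "\<exists>t\<in>M ds. t \<noteq> ds \<and> t \<noteq> s \<and> \<not> E s t"
  proof (rule ccontr)
    assume none: "\<not> ?thesis"
    let ?S = "insert s (D - {ds})"
    have "dominating V E ?S"
    proof (rule dominating_exchange)
      show "?S \<subseteq> V" using s_in_V D_subset by auto
      show "v \<in> ?S \<or> (\<exists>y\<in>?S. E v y)" using leaf by auto
      fix d x assume "d \<in> D - ?S" and x: "x \<in> M d - ?S"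
      then have "d = ds" by auto
      then have "x = ds \<or> E s x" using none x by auto
      then show "\<exists>y\<in>?S. E x y" using ds_facts(4) sym by auto
    qed
    moreover have "card ?S = card D"
      using s_notin_D ds_facts(1) finite_D card_gt_0_iff[of D] by auto
    ultimately show False using card_D_lt_card_dominating by fastforce
  qed
  then obtain t where t: "t \<in> M ds" "t \<noteq> ds" "t \<noteq> s" "\<not> E s t" by blast
  have sub: "{ds, s, t} \<subseteq> M ds" using t(1) ds_facts(5) ds_facts(2) D_subset ds_facts(1)
    by (auto simp: mem_M)
  moreover have "card {ds, s, t} = 3" using t ds_facts(3) by simp
  ultimately have "3 \<le> card (M ds)" using card_mono[OF finite_M] by metis
  then have "card (M ds) = 3" using card_M_eq_3(1) ds_facts(1) by blast
  then have "M ds = {ds, s, t}" using sub \<open>card {ds, s, t} = 3\<close> finite_M by (metis card_seteq order_refl)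
  then show ?thesis using that t by blast
qed

text \<open>A further neighbour w of t lies in a block {d', w} of size 2, and then s and w can replace
  ds and d', again giving a dominating set of size |D| < \<gamma>.\<close>

lemma block_vertex_is_leaf:
  assumes ds: "M s \<inter> D = {ds}"
    and t: "M ds = {ds, s, t}" "t \<noteq> ds" "t \<noteq> s" "\<not> E s t"
    and "E t w"
  shows "w = ds"
proof (rule ccontr)
  assume "w \<noteq> ds"
  note ds_facts = owner_of_s[OF ds]
  have t_in: "t \<in> V" "t \<noteq> v" "E ds t" using t(1,2) mem_M[OF ds_facts(2), of t] by auto
  have w_in: "w \<in> V" "w \<noteq> v"
    using \<open>E t w\<close> edge_in_V(2) sym[OF \<open>E t w\<close>] leaf[of t] t(3) by auto
  have "w \<notin> M ds" using t \<open>w \<noteq> ds\<close> \<open>E t w\<close> irrefl sym by auto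
  obtain d' where d': "M w \<inter> D = {d'}" using M_owner w_in by blast
  then have d'_in: "d' \<in> D" "d' \<noteq> v" using D_subset by auto
  have w_in_M: "w \<in> M d'" using d' mem_M_commute[OF w_in(2) d'_in(2)] by blast
  then have "d' \<noteq> ds" using \<open>w \<notin> M ds\<close> by blast
  have "d' \<noteq> w"
  proof
    assume "d' = w"
    obtain e where e: "M t \<inter> D = {e}" using M_owner t_in by blast
    have "w \<in> M t \<inter> D" "ds \<in> M t \<inter> D"
      using \<open>d' = w\<close> d'_in \<open>E t w\<close> w_in t_in(2) ds_facts(1,2) sym[OF t_in(3)] D_subset
      by (auto simp: mem_M[OF t_in(2)])
    then show False using e \<open>w \<noteq> ds\<close> by auto
  qed
  have "card (M ds) = 3" using t ds_facts(3) by simp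
  then have "card (M d') = 2" using card_M_eq_3(2)[OF ds_facts(1) _ d'_in(1) \<open>d' \<noteq> ds\<close>] by simp
  moreover have "{d', w} \<subseteq> M d'" using w_in_M d'_in D_subset by (auto simp: mem_M)
  moreover have "card {d', w} = 2" using \<open>d' \<noteq> w\<close> by simp
  ultimately have M_d': "M d' = {d', w}" using card_seteq[OF finite_M] by (metis order_refl)
  have "E d' w" using w_in_M \<open>d' \<noteq> w\<close> mem_M[OF d'_in(2)] by simp
  let ?S = "insert s (insert w (D - {ds, d'}))"
  have "dominating V E ?S"
  proof (rule dominating_exchange)
    show "?S \<subseteq> V" using s_in_V w_in D_subset by auto
    show "v \<in> ?S \<or> (\<exists>y\<in>?S. E v y)" using leaf by auto
    fix d x assume d: "d \<in> D - ?S" and x: "x \<in> M d - ?S"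
    then have "d = ds \<or> d = d'" by blast
    then have "(d = ds \<and> x \<in> {ds, t}) \<or> (d = d' \<and> x = d')" using x t(1) M_d' by blast
    then show "\<exists>y\<in>?S. E x y" using sym[OF ds_facts(4)] \<open>E t w\<close> \<open>E d' w\<close> by auto
  qed
  moreover have "card ?S \<le> card D"
  proof -
    have "{ds, d'} \<subseteq> D" "card {ds, d'} = 2" using ds_facts(1) d'_in(1) \<open>d' \<noteq> ds\<close> by auto
    then have "card (D - {ds, d'}) + 2 = card D"
      using card_Diff_subset[OF _ \<open>{ds, d'} \<subseteq> D\<close>] card_mono[OF finite_D \<open>{ds, d'} \<subseteq> D\<close>]
      by simp
    moreover have "card ?S \<le> card (D - {ds, d'}) + 2" using finite_D by (simp add: card_insert_if)
    ultimately show ?thesis by linarith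
  qed
  ultimately show False using card_D_lt_card_dominating by fastforce
qed

lemma M_inter_swap:
  assumes ds: "M s \<inter> D = {ds}"
    and t: "M ds = {ds, s, t}" "\<And>w. E t w \<Longrightarrow> w = ds"
    and "x \<noteq> v" "x \<notin> {s, ds, t}"
  shows "M x \<inter> insert t (D - {ds}) = M x \<inter> D"
proof -
  have "ds \<noteq> v" by (rule owner_of_s(2)[OF ds])
  have "t \<notin> M x" using t(2)[of x] sym[of x t] assms(5) mem_M[OF \<open>x \<noteq> v\<close>] by auto
  moreover have "ds \<notin> M x" using mem_M_commute[OF \<open>ds \<noteq> v\<close> \<open>x \<noteq> v\<close>] t(1) assms(5) by auto
  ultimately show ?thesis by blast
qed

lemma efficient_dominating_swap:
  assumes ds: "M s \<inter> D = {ds}"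
    and t: "M ds = {ds, s, t}" "t \<noteq> ds" "t \<noteq> s" "\<not> E s t"
    and t_leaf: "\<And>w. E t w \<Longrightarrow> w = ds"
  shows "efficient_dominating V E (insert v (insert t (D - {ds})))"
  unfolding efficient_dominating_iff
proof (intro conjI ballI)
  note ds_facts = owner_of_s[OF ds]
  let ?X = "insert t (D - {ds})"
  have t_in: "t \<in> V" "t \<noteq> v" using t(1,2) mem_M[OF ds_facts(2), of t] by auto
  show "insert v ?X \<subseteq> V" using v_in_V t_in D_subset by auto
  fix x assume x: "x \<in> V"
  have split: "N x \<inter> insert v ?X = (N x \<inter> {v}) \<union> (M x \<inter> ?X)" if "x \<noteq> v"
    using closed_nbhd_del_edges[OF that, of V E] by blast
  have v_nbr: "N x \<inter> {v} = (if x = s then {v} else {})" if "x \<noteq> v"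
  proof -
    have "E x v \<longleftrightarrow> x = s" using sym[of x v] sym[of v x] leaf[of x] by blast
    then show ?thesis using v_in_V that by (auto simp: mem_closed_nbhd)
  qed
  consider "x = v" | "x = s" | "x = ds" | "x = t" | "x \<noteq> v" "x \<notin> {s, ds, t}" by blast
  then show "\<exists>d. N x \<inter> insert v ?X = {d}"
  proof cases
    case 1
    have "N v = {v, s}" using leaf s_in_V v_in_V by (auto simp: closed_nbhd_def)
    moreover have "s \<notin> insert v ?X" using s_notin_D t(3) s_ne_v by auto
    ultimately show ?thesis using 1 by blast
  next
    case 2
    have "t \<notin> M s" using t(3,4) mem_M[OF s_ne_v] by simp
    then have "M s \<inter> ?X = {}" using ds by blast
    moreover have "x \<noteq> v" using 2 s_ne_v by simp
    ultimately show ?thesis using 2 split v_nbr by auto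
  next
    case 3
    have "M ds \<inter> ?X = {t}" using t(1,3) s_notin_D by auto
    moreover have "x \<noteq> v" using 3 ds_facts(2) by simp
    ultimately show ?thesis using 3 split v_nbr ds_facts(3) by auto
  next
    case 4
    have "M t \<subseteq> {t, ds}" using t_leaf mem_M[OF t_in(2)] by auto
    moreover have "t \<in> M t" using t_in mem_M[OF t_in(2)] by simp
    ultimately have "M t \<inter> ?X = {t}" by auto
    moreover have "x \<noteq> v" using 4 t_in(2) by simp
    ultimately show ?thesis using 4 split v_nbr t(3) by auto
  next
    case 5
    then have "N x \<inter> insert v ?X = M x \<inter> ?X" using split v_nbr by auto
    also have "\<dots> = M x \<inter> D" using M_inter_swap[OF ds t(1) t_leaf 5] .
    finally show ?thesis using M_owner x 5(1) by simp
  qed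
qed

end

context hypo_efficient_graph
begin

lemma no_leaf_if_half:
  assumes half: "2 * domination_number V E = card V" and "l \<in> V" and "E l s"
  shows "\<exists>u. E l u \<and> u \<noteq> s"
proof (rule ccontr)
  assume "\<not> ?thesis"
  then have leaf: "E l u \<longleftrightarrow> u = s" for u using \<open>E l s\<close> by blast
  obtain D where D: "efficient_dominating (V - {l}) (del_edges E l) D"
    using efficient_dominating_delete[OF \<open>l \<in> V\<close>] .
  interpret leaf_deleted_eds V E l D s
    using \<open>l \<in> V\<close> D leaf half by unfold_locales auto
  obtain ds where ds: "M s \<inter> D = {ds}" using M_owner s_in_V s_ne_v by blast
  obtain t where t: "M ds = {ds, s, t}" "t \<noteq> ds" "t \<noteq> s" "\<not> E s t"
    using block_of_owner_of_s[OF ds] .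
  have "efficient_dominating V E (insert l (insert t (D - {ds})))"
    using efficient_dominating_swap[OF ds t block_vertex_is_leaf[OF ds t]] .
  then show False using no_efficient_dominating by blast
qed

lemma is_C4_if_half:
  assumes half: "2 * domination_number V E = card V"
  shows "is_C4 V E"
proof -
  have two_nbrs: "\<exists>u w. E x u \<and> E x w \<and> u \<noteq> w" if "x \<in> V" for x
    using not_isolated[OF that] no_leaf_if_half[OF half that] by blast
  obtain v where v: "v \<in> V" using V_nonempty by blast
  obtain D where "efficient_dominating (V - {v}) (del_edges E v) D"
    using efficient_dominating_delete[OF v] .
  then interpret vertex_deleted_eds V E v D
    using v by unfold_locales
  have "card V = 4"
    using card_V_le_4_if_half[OF half two_nbrs]
      four_le_card[OF simple V_nonempty not_isolated not_universal] by linarith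
  then show ?thesis using is_C4_if_card_4[OF simple _ two_nbrs not_universal] by blast
qed

end

theorem proposition3p8:
  fixes V :: "'a set" and E :: "'a \<Rightarrow> 'a \<Rightarrow> bool"
  assumes "simple_graph V E" and "hypo_efficient V E"
  shows "connected_graph V E \<and> card V \<ge> 4
    \<and> 2 \<le> domination_number V E \<and> 2 * domination_number V E \<le> card V
    \<and> (2 * domination_number V E = card V \<longleftrightarrow> is_C4 V E)"
proof -
  interpret hypo_efficient_graph V E using assms by unfold_locales
  have "4 \<le> card V" using four_le_card[OF simple V_nonempty not_isolated not_universal] .
  moreover have "2 \<le> domination_number V E"
    using two_le_domination_number[OF simple V_nonempty not_universal] .
  moreover have "2 * domination_number V E \<le> card V"
    using domination_number_le_half[OF simple not_isolated] .
  moreover have "2 * domination_number V E = card V \<longleftrightarrow> is_C4 V E"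
    using is_C4_if_half domination_number_C4[OF simple] card_C4 by auto
  ultimately show ?thesis using connected by blast
qed

end
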